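(* Every Young subgroup $\mathrm{Sym}(\lambda)\leq\mathrm{Sym}(n)$, with its natural action on $\{1,\dots,n\}$, has the EKR property.
   Context: For a partition $\lambda=[\lambda_1,\dots,\lambda_k]$ of $n$, let $\Omega_i=\{\lambda_1+\cdots+\lambda_{i-1}+1,\dots,\lambda_1+\cdots+\lambda_i\}$; the Young subgroup $\mathrm{Sym}(\lambda)$ is the subgroup $\mathrm{Sym}(\Omega_1)\cdots\mathrm{Sym}(\Omega_k)$ of permutations preserving each $\Omega_i$. Two permutations $\pi,\tau$ intersect if $\pi\tau^{-1}$ has a fixed point; a subset is intersecting if every pair intersects; a group has the EKR property if every intersecting subset has size at most the size of the largest point-stabilizer. *)

theory Defs
  imports "HOL-Combinatorics.Permutations"
begin

definition is_partition :: "nat list \<Rightarrow> nat \<Rightarrow> bool" where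
  "is_partition lam n \<longleftrightarrow> sorted_wrt (\<ge>) lam \<and> (\<forall>x\<in>set lam. 0 < x) \<and> sum_list lam = n"

text \<open>The i-th block (0-indexed), corresponding to \<Omega>_{i+1} in the paper.\<close>
definition young_block :: "nat list \<Rightarrow> nat \<Rightarrow> nat set" where
  "young_block lam i = {sum_list (take i lam) + 1 .. sum_list (take (Suc i) lam)}"

definition young_subgroup :: "nat list \<Rightarrow> (nat \<Rightarrow> nat) set" where
  "young_subgroup lam = {p. p permutes {1..sum_list lam} \<and>
      (\<forall>i < length lam. p ` young_block lam i = young_block lam i)}"

definition perms_intersect :: "'a set \<Rightarrow> ('a \<Rightarrow> 'a) \<Rightarrow> ('a \<Rightarrow> 'a) \<Rightarrow> bool" where
  "perms_intersect \<Omega> p q \<longleftrightarrow> (\<exists>x\<in>\<Omega>. (p \<circ> inv q) x = x)"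

definition intersecting_set :: "'a set \<Rightarrow> ('a \<Rightarrow> 'a) set \<Rightarrow> ('a \<Rightarrow> 'a) set \<Rightarrow> bool" where
  "intersecting_set \<Omega> G S \<longleftrightarrow> S \<subseteq> G \<and> (\<forall>p\<in>S. \<forall>q\<in>S. perms_intersect \<Omega> p q)"

definition point_stabilizer :: "('a \<Rightarrow> 'a) set \<Rightarrow> 'a \<Rightarrow> ('a \<Rightarrow> 'a) set" where
  "point_stabilizer G x = {g \<in> G. g x = x}"

definition has_EKR :: "'a set \<Rightarrow> ('a \<Rightarrow> 'a) set \<Rightarrow> bool" where
  "has_EKR \<Omega> G \<longleftrightarrow> (\<forall>S. intersecting_set \<Omega> G S \<longrightarrow>
       card S \<le> Max ((\<lambda>x. card (point_stabilizer G x)) ` \<Omega>))"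

end

theory Submission
  imports Defs "HOL-Library.Disjoint_Sets" "HOL-Number_Theory.Cong"
begin

text \<open>
  Clique--coclique bound. Let \<open>m\<close> be the smallest part of \<open>\<lambda>\<close> and \<open>x\<close> a point of a smallest
  block. Rotating every block cyclically by \<open>0, \<dots>, m - 1\<close> steps gives \<open>m\<close> elements of
  \<open>Sym(\<lambda>)\<close> any two of which disagree at every point. Their left translates of an intersecting
  set \<open>S\<close> are pairwise disjoint, so \<open>m |S| \<le> |Sym(\<lambda>)|\<close>; and since the orbit of \<open>x\<close> is its
  block, \<open>|Sym(\<lambda>)| \<le> m |Sym(\<lambda>)\<^sub>x|\<close>.
\<close>

text \<open>A clique in the derangement graph, whose edges join \<open>p, q\<close> when \<open>p \<circ> inv q\<close> is fixed-point-free.\<close>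
definition derangement_clique :: "'a set \<Rightarrow> ('a \<Rightarrow> 'a) set \<Rightarrow> bool" where
  "derangement_clique \<Omega> C \<longleftrightarrow> (\<forall>p\<in>C. \<forall>q\<in>C. p \<noteq> q \<longrightarrow> (\<forall>x\<in>\<Omega>. p x \<noteq> q x))"

lemma clique_coclique_bound:
  assumes perm: "\<And>p. p \<in> G \<Longrightarrow> p permutes \<Omega>"
    and comp: "\<And>p q. p \<in> G \<Longrightarrow> q \<in> G \<Longrightarrow> p \<circ> q \<in> G"
    and "finite G" and "C \<subseteq> G" and clique: "derangement_clique \<Omega> C"
    and S: "intersecting_set \<Omega> G S"
  shows "card C * card S \<le> card G"
proof -
  have SG: "S \<subseteq> G" using S by (simp add: intersecting_set_def)
  have inj: "inj_on (\<lambda>(c, s). c \<circ> s) (C \<times> S)"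
  proof (rule inj_onI, clarify)
    fix c s c' s' assume c: "c \<in> C" "c' \<in> C" and s: "s \<in> S" "s' \<in> S"
      and eq: "c \<circ> s = c' \<circ> s'"
    have "perms_intersect \<Omega> s s'"
      using S s unfolding intersecting_set_def by blast
    then obtain x where x: "x \<in> \<Omega>" "s (inv s' x) = x"
      unfolding perms_intersect_def by auto
    have "s' permutes \<Omega>" using perm SG s(2) by blast
    then have "s' (inv s' x) = x" by (rule permutes_inverses(1))
    then have "c x = c' x" using eq x(2) by (metis comp_apply)
    then have "c = c'" using clique c x(1) unfolding derangement_clique_def by blast
    moreover have "inj c" using perm \<open>C \<subseteq> G\<close> c(1) permutes_inj by blast
    ultimately have "s = s'"
      using eq by (metis comp_apply ext injD)
    with \<open>c = c'\<close> show "c = c' \<and> s = s'" by simp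
  qed
  have "(\<lambda>(c, s). c \<circ> s) ` (C \<times> S) \<subseteq> G"
    using \<open>C \<subseteq> G\<close> SG comp by auto
  then have "card (C \<times> S) \<le> card G"
    using card_inj_on_le[OF inj _ \<open>finite G\<close>] by blast
  then show ?thesis by (simp add: card_cartesian_product)
qed

lemma card_le_orbit_times_stabilizer:
  assumes perm: "\<And>p. p \<in> G \<Longrightarrow> p permutes \<Omega>"
    and comp: "\<And>p q. p \<in> G \<Longrightarrow> q \<in> G \<Longrightarrow> p \<circ> q \<in> G"
    and "finite G" and "finite Y"
    and orbit: "\<And>g. g \<in> G \<Longrightarrow> g x \<in> Y"
    and transitive: "\<And>y. y \<in> Y \<Longrightarrow> \<exists>t\<in>G. t y = x"
  shows "card G \<le> card Y * card (point_stabilizer G x)"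
proof -
  have fibre: "card {g \<in> G. g x = y} \<le> card (point_stabilizer G x)" if y: "y \<in> Y" for y
  proof -
    obtain t where t: "t \<in> G" "t y = x" using transitive[OF y] by blast
    have "inj t" using perm[OF t(1)] by (rule permutes_inj)
    show ?thesis
    proof (rule card_inj_on_le)
      show "inj_on ((\<circ>) t) {g \<in> G. g x = y}"
        using \<open>inj t\<close> by (intro inj_onI) (metis comp_apply ext injD)
      show "(\<circ>) t ` {g \<in> G. g x = y} \<subseteq> point_stabilizer G x"
        using t comp by (auto simp: point_stabilizer_def)
      show "finite (point_stabilizer G x)"
        using \<open>finite G\<close> by (simp add: point_stabilizer_def)
    qed
  qed
  have "G \<subseteq> (\<Union>y\<in>Y. {g \<in> G. g x = y})" using orbit by blast
  then have "card G \<le> card (\<Union>y\<in>Y. {g \<in> G. g x = y})"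
    using \<open>finite G\<close> \<open>finite Y\<close> by (intro card_mono) auto
  also have "\<dots> \<le> (\<Sum>y\<in>Y. card {g \<in> G. g x = y})"
    using \<open>finite Y\<close> by (rule card_UN_le)
  also have "\<dots> \<le> (\<Sum>y\<in>Y. card (point_stabilizer G x))"
    using fibre by (rule sum_mono)
  finally show ?thesis by simp
qed

lemma mod_add_right_cancel_less:
  fixes a b k L :: nat
  assumes "a < L" "b < L" "(a + k) mod L = (b + k) mod L"
  shows "a = b"
proof -
  have "[a + k = b + k] (mod L)" using assms(3) by (simp only: cong_def)
  then have "[a = b] (mod L)" by (simp only: cong_add_rcancel_nat)
  then show ?thesis using assms(1,2) by (rule cong_less_modulus_unique_nat)
qed

lemma shift_mod_permutes:
  fixes L k :: nat
  shows "restrict_id (\<lambda>a. (a + k) mod L) {..<L} permutes {..<L}"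
proof (rule permutes_restrict_id)
  have "inj_on (\<lambda>a. (a + k) mod L) {..<L}"
  proof (rule inj_onI)
    fix a b assume "a \<in> {..<L}" "b \<in> {..<L}" "(a + k) mod L = (b + k) mod L"
    then show "a = b" by (simp add: mod_add_right_cancel_less)
  qed
  moreover have "(\<lambda>a. (a + k) mod L) ` {..<L} \<subseteq> {..<L}"
    by (auto intro: mod_less_divisor)
  ultimately show "bij_betw (\<lambda>a. (a + k) mod L) {..<L} {..<L}"
    unfolding bij_betw_def using endo_inj_surj[OF finite_lessThan] by blast
qed

lemma ex_rotations:
  assumes "finite B"
  obtains f where "\<And>k. f k permutes B"
    and "\<And>k k' x. k < card B \<Longrightarrow> k' < card B \<Longrightarrow> k \<noteq> k' \<Longrightarrow> x \<in> B \<Longrightarrow> f k x \<noteq> f k' x"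
proof -
  let ?L = "card B"
  obtain e where e: "bij_betw e {..<?L} B"
    using assms ex_bij_betw_nat_finite lessThan_atLeast0 by metis
  define f where "f k = map_permutation {..<?L} e (restrict_id (\<lambda>a. (a + k) mod ?L) {..<?L})" for k
  have "f k permutes B" for k
    unfolding f_def using e shift_mod_permutes by (rule map_permutation_permutes)
  moreover have "f k x \<noteq> f k' x"
    if "k < ?L" "k' < ?L" "k \<noteq> k'" "x \<in> B" for k k' x
  proof
    obtain a where a: "a < ?L" "x = e a"
      using e \<open>x \<in> B\<close> by (auto simp: bij_betw_def)
    have f_e: "f j x = e ((a + j) mod ?L)" for j
      using e a by (simp add: f_def bij_betw_def map_permutation_apply)
    assume "f k x = f k' x"
    then have "(k + a) mod ?L = (k' + a) mod ?L"
      using e a(1) unfolding f_e bij_betw_def inj_on_def by (simp add: add.commute)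
    then show False
      using that(1-3) mod_add_right_cancel_less by blast
  qed
  ultimately show ?thesis using that by blast
qed

lemma partition_on_block_eq:
  assumes "partition_on \<Omega> P" "b \<in> P" "b' \<in> P" "x \<in> b" "x \<in> b'"
  shows "b = b'"
  using assms disjointD[OF partition_onD2[OF assms(1)]] by blast

lemma ex_glued_permutation:
  assumes part: "partition_on \<Omega> P" and f: "\<And>b. b \<in> P \<Longrightarrow> f b permutes b"
  obtains g where "g permutes \<Omega>" "\<And>b x. b \<in> P \<Longrightarrow> x \<in> b \<Longrightarrow> g x = f b x"
proof -
  define h where "h x = f (THE b. b \<in> P \<and> x \<in> b) x" for x
  have h: "h x = f b x" if "b \<in> P" "x \<in> b" for b x
  proof -
    have "(THE b. b \<in> P \<and> x \<in> b) = b"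
      using that partition_on_block_eq[OF part] by (intro the_equality) blast+
    then show ?thesis by (simp add: h_def)
  qed
  have "bij_betw h (\<Union>b\<in>P. b) (\<Union>b\<in>P. b)"
  proof (rule bij_betw_UNION_disjoint)
    show "disjoint_family_on (\<lambda>b. b) P"
      using partition_onD2[OF part] by (auto simp: disjoint_family_on_def disjoint_def)
    show "bij_betw h b b" if "b \<in> P" for b
    proof -
      have "bij_betw h b b \<longleftrightarrow> bij_betw (f b) b b" by (rule bij_betw_cong) (rule h[OF that])
      then show ?thesis using permutes_imp_bij[OF f[OF that]] by simp
    qed
  qed
  then have "bij_betw h \<Omega> \<Omega>" using partition_onD1[OF part] by simp
  then have "restrict_id h \<Omega> permutes \<Omega>" by (rule permutes_restrict_id)
  moreover have "restrict_id h \<Omega> x = f b x" if "b \<in> P" "x \<in> b" for b x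
  proof -
    have "x \<in> \<Omega>" using that partition_onD1[OF part] by blast
    then show ?thesis by (simp add: h[OF that])
  qed
  ultimately show ?thesis using that by blast
qed

definition block_group :: "'a set \<Rightarrow> 'a set set \<Rightarrow> ('a \<Rightarrow> 'a) set" where
  "block_group \<Omega> P = {p. p permutes \<Omega> \<and> (\<forall>b\<in>P. p ` b = b)}"

lemma block_group_comp:
  assumes "p \<in> block_group \<Omega> P" "q \<in> block_group \<Omega> P"
  shows "p \<circ> q \<in> block_group \<Omega> P"
proof -
  have "(p \<circ> q) ` b = p ` (q ` b)" for b by (rule image_comp[symmetric])
  then show ?thesis using assms by (simp add: block_group_def permutes_compose)
qed

lemma finite_block_group: "finite \<Omega> \<Longrightarrow> finite (block_group \<Omega> P)"
  by (rule finite_subset[OF _ finite_permutations]) (auto simp: block_group_def)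

lemma transpose_in_block_group:
  assumes part: "partition_on \<Omega> P" and "b \<in> P" "x \<in> b" "y \<in> b"
  shows "transpose x y \<in> block_group \<Omega> P"
  unfolding block_group_def
proof (intro CollectI conjI ballI)
  show "transpose x y permutes \<Omega>"
    using assms partition_onD1[OF part] by (intro permutes_swap_id) auto
  show "transpose x y ` b' = b'" if "b' \<in> P" for b'
    using partition_on_block_eq[OF part] assms that by (intro transpose_image_eq) blast
qed

lemma ex_block_rotations:
  assumes part: "partition_on \<Omega> P" and "finite \<Omega>"
  obtains c where "\<And>k. c k \<in> block_group \<Omega> P"
    and "\<And>b k k' x. b \<in> P \<Longrightarrow> k < card b \<Longrightarrow> k' < card b \<Longrightarrow> k \<noteq> k' \<Longrightarrow> x \<in> b
      \<Longrightarrow> c k x \<noteq> c k' x"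
proof -
  have "\<forall>b\<in>P. \<exists>r. (\<forall>k. r k permutes b) \<and>
      (\<forall>k k' x. k < card b \<longrightarrow> k' < card b \<longrightarrow> k \<noteq> k' \<longrightarrow> x \<in> b \<longrightarrow> r k x \<noteq> r k' x)"
    (is "\<forall>b\<in>P. \<exists>r. ?rot b r")
  proof
    fix b assume "b \<in> P"
    then have "finite b" using \<open>finite \<Omega>\<close> partition_onD1[OF part] by (meson Sup_upper finite_subset)
    then show "\<exists>r. ?rot b r" by (rule ex_rotations) blast
  qed
  then obtain r where r: "\<forall>b\<in>P. ?rot b (r b)" by (rule bchoice[THEN exE])
  have r_perm: "\<And>b k. b \<in> P \<Longrightarrow> r b k permutes b" using r by blast
  have "\<forall>k. \<exists>g. g permutes \<Omega> \<and> (\<forall>b\<in>P. \<forall>x\<in>b. g x = r b k x)"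
    (is "\<forall>k. \<exists>g. ?glued k g")
  proof
    fix k
    obtain g where "g permutes \<Omega>" "\<And>b x. b \<in> P \<Longrightarrow> x \<in> b \<Longrightarrow> g x = r b k x"
      using ex_glued_permutation[OF part, of "\<lambda>b. r b k"] r_perm by blast
    then show "\<exists>g. ?glued k g" by blast
  qed
  then obtain c where c: "\<forall>k. ?glued k (c k)" by (rule choice[THEN exE])
  have c_r: "\<And>k b x. b \<in> P \<Longrightarrow> x \<in> b \<Longrightarrow> c k x = r b k x" using c by blast
  have "c k \<in> block_group \<Omega> P" for k
  proof -
    have "c k ` b = r b k ` b" if "b \<in> P" for b
      using c_r[OF that] by (rule image_cong[OF refl])
    then show ?thesis
      using c permutes_image[OF r_perm] by (simp add: block_group_def)
  qed
  moreover have "c k x \<noteq> c k' x"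
    if "b \<in> P" "k < card b" "k' < card b" "k \<noteq> k'" "x \<in> b" for b k k' x
    using that r c_r[of b x] by simp
  ultimately show ?thesis using that by blast
qed

lemma block_group_derangement_clique:
  assumes part: "partition_on \<Omega> P" and "finite \<Omega>" "\<Omega> \<noteq> {}"
    and m: "\<And>b. b \<in> P \<Longrightarrow> m \<le> card b"
  obtains C where "C \<subseteq> block_group \<Omega> P" "card C = m" "derangement_clique \<Omega> C"
proof -
  obtain c where c_block: "\<And>k. c k \<in> block_group \<Omega> P"
    and c_rot: "\<And>b k k' x. b \<in> P \<Longrightarrow> k < card b \<Longrightarrow> k' < card b \<Longrightarrow> k \<noteq> k' \<Longrightarrow> x \<in> b
      \<Longrightarrow> c k x \<noteq> c k' x"
    using ex_block_rotations[OF part \<open>finite \<Omega>\<close>] by blast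
  have c_distinct: "c k x \<noteq> c k' x" if "k < m" "k' < m" "k \<noteq> k'" "x \<in> \<Omega>" for k k' x
  proof -
    obtain b where "b \<in> P" "x \<in> b" using partition_onD1[OF part] \<open>x \<in> \<Omega>\<close> by blast
    then show ?thesis using that c_rot[of b k k' x] m[of b] by simp
  qed
  have "inj_on c {..<m}"
  proof (rule inj_onI)
    obtain x where "x \<in> \<Omega>" using \<open>\<Omega> \<noteq> {}\<close> by blast
    fix k k' assume "k \<in> {..<m}" "k' \<in> {..<m}" "c k = c k'"
    then show "k = k'" using c_distinct[of k k' x] \<open>x \<in> \<Omega>\<close> by auto
  qed
  then have "card (c ` {..<m}) = m" by (simp add: card_image)
  moreover have "derangement_clique \<Omega> (c ` {..<m})"
    using c_distinct by (auto simp: derangement_clique_def)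
  ultimately show ?thesis using that c_block by blast
qed

lemma block_group_EKR_bound:
  assumes part: "partition_on \<Omega> P" and "finite \<Omega>"
    and b: "b \<in> P" and b_min: "\<And>b'. b' \<in> P \<Longrightarrow> card b \<le> card b'" and x: "x \<in> b"
    and S: "intersecting_set \<Omega> (block_group \<Omega> P) S"
  shows "card S \<le> card (point_stabilizer (block_group \<Omega> P) x)"
proof -
  let ?G = "block_group \<Omega> P"
  have b_sub: "b \<subseteq> \<Omega>" using partition_onD1[OF part] b by blast
  have "finite b" using \<open>finite \<Omega>\<close> b_sub by (rule finite_subset[rotated])
  have perm: "\<And>p. p \<in> ?G \<Longrightarrow> p permutes \<Omega>" by (simp add: block_group_def)
  have fin: "finite ?G" using \<open>finite \<Omega>\<close> by (rule finite_block_group)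
  have "\<Omega> \<noteq> {}" using x b_sub by blast
  obtain C where C: "C \<subseteq> ?G" "card C = card b" "derangement_clique \<Omega> C"
    using block_group_derangement_clique[OF part \<open>finite \<Omega>\<close> \<open>\<Omega> \<noteq> {}\<close> b_min] by blast
  have "card C * card S \<le> card ?G"
    by (rule clique_coclique_bound) (fact perm block_group_comp fin C S)+
  then have "card b * card S \<le> card ?G" using \<open>card C = card b\<close> by simp
  also have "card ?G \<le> card b * card (point_stabilizer ?G x)"
  proof (rule card_le_orbit_times_stabilizer)
    show "g x \<in> b" if "g \<in> ?G" for g
      using that b x by (auto simp: block_group_def)
    show "\<exists>t\<in>?G. t y = x" if "y \<in> b" for y
      using transpose_in_block_group[OF part b that x] transpose_apply_first by metis
  qed (fact perm block_group_comp fin \<open>finite b\<close>)+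
  finally show ?thesis
    using \<open>finite b\<close> x by (auto simp: card_gt_0_iff)
qed

lemma has_EKR_block_group:
  assumes part: "partition_on \<Omega> P" and "finite \<Omega>" and "\<Omega> \<noteq> {}"
  shows "has_EKR \<Omega> (block_group \<Omega> P)"
  unfolding has_EKR_def
proof (intro allI impI)
  fix S assume S: "intersecting_set \<Omega> (block_group \<Omega> P) S"
  have "finite P" using \<open>finite \<Omega>\<close> part by (rule finite_elements)
  moreover have "P \<noteq> {}" using partition_onD1[OF part] \<open>\<Omega> \<noteq> {}\<close> by auto
  ultimately have "Min (card ` P) \<in> card ` P" by simp
  then obtain b where b: "b \<in> P" and "card b = Min (card ` P)" by (metis imageE)
  then have b_min: "card b \<le> card b'" if "b' \<in> P" for b'
    using \<open>finite P\<close> that by simp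
  obtain x where x: "x \<in> b" using partition_onD3[OF part] b by (metis ex_in_conv)
  have "x \<in> \<Omega>" using partition_onD1[OF part] b x by blast
  have "card S \<le> card (point_stabilizer (block_group \<Omega> P) x)"
    by (rule block_group_EKR_bound[OF part \<open>finite \<Omega>\<close> b b_min x S])
  also have "\<dots> \<le> Max ((\<lambda>x. card (point_stabilizer (block_group \<Omega> P) x)) ` \<Omega>)"
    using \<open>finite \<Omega>\<close> \<open>x \<in> \<Omega>\<close> by (intro Max_ge) auto
  finally show "card S \<le> Max ((\<lambda>x. card (point_stabilizer (block_group \<Omega> P) x)) ` \<Omega>)" .
qed

lemma sum_list_take_mono:
  fixes xs :: "nat list"
  assumes "i \<le> j"
  shows "sum_list (take i xs) \<le> sum_list (take j xs)"
proof -
  have "take j xs = take i xs @ take (j - i) (drop i xs)"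
    using take_add[of i "j - i" xs] assms by simp
  then show ?thesis by (metis le_add1 sum_list_append)
qed

lemma young_block_subset:
  assumes "i < length lam"
  shows "young_block lam i \<subseteq> {1..sum_list lam}"
proof -
  have "sum_list (take (Suc i) lam) \<le> sum_list (take (length lam) lam)"
    using assms by (intro sum_list_take_mono) simp
  then show ?thesis unfolding young_block_def by auto
qed

lemma card_young_block:
  assumes "i < length lam"
  shows "card (young_block lam i) = lam ! i"
  using assms by (simp add: young_block_def take_Suc_conv_app_nth)

lemma disjoint_family_on_young_blocks:
  "disjoint_family_on (young_block lam) {..<length lam}"
proof -
  have "young_block lam i \<inter> young_block lam j = {}" if "i < j" for i j
  proof -
    have "sum_list (take (Suc i) lam) \<le> sum_list (take j lam)"
      using that by (intro sum_list_take_mono) simp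
    then show ?thesis unfolding young_block_def by auto
  qed
  then show ?thesis
    unfolding disjoint_family_on_def
    by (metis Int_commute nat_neq_iff)
qed

lemma young_block_cover:
  "x \<in> {1..sum_list lam} \<Longrightarrow> \<exists>i<length lam. x \<in> young_block lam i"
proof (induction lam arbitrary: x)
  case Nil
  then show ?case by simp
next
  case (Cons a xs)
  show ?case
  proof (cases "x \<le> a")
    case True
    then have "x \<in> young_block (a # xs) 0" using Cons.prems by (simp add: young_block_def)
    then show ?thesis by blast
  next
    case False
    then have "x - a \<in> {1..sum_list xs}" using Cons.prems by auto
    then obtain i where "i < length xs" "x - a \<in> young_block xs i"
      using Cons.IH by blast
    then have "Suc i < length (a # xs)" "x \<in> young_block (a # xs) (Suc i)"
      using False by (auto simp: young_block_def)
    then show ?thesis by blast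
  qed
qed

lemma partition_on_young_blocks:
  assumes "\<forall>x\<in>set lam. 0 < x"
  shows "partition_on {1..sum_list lam} (young_block lam ` {..<length lam})"
proof (rule partition_onI)
  show "\<Union>(young_block lam ` {..<length lam}) = {1..sum_list lam}"
  proof
    show "\<Union>(young_block lam ` {..<length lam}) \<subseteq> {1..sum_list lam}"
      using young_block_subset by blast
    show "{1..sum_list lam} \<subseteq> \<Union>(young_block lam ` {..<length lam})"
      using young_block_cover by blast
  qed
  show "disjnt b b'" if "b \<in> young_block lam ` {..<length lam}"
    "b' \<in> young_block lam ` {..<length lam}" "b \<noteq> b'" for b b'
    using disjoint_family_on_disjoint_image[OF disjoint_family_on_young_blocks] that
    unfolding pairwise_def by blast
  show "{} \<notin> young_block lam ` {..<length lam}"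
  proof
    assume "{} \<in> young_block lam ` {..<length lam}"
    then obtain i where "i < length lam" "young_block lam i = {}" by auto
    then have "lam ! i = 0" using card_young_block[of i lam] by simp
    with \<open>i < length lam\<close> assms show False by (metis nth_mem less_irrefl)
  qed
qed

lemma young_subgroup_eq_block_group:
  "young_subgroup lam = block_group {1..sum_list lam} (young_block lam ` {..<length lam})"
  by (auto simp: young_subgroup_def block_group_def)

theorem corollary20:
  fixes lam :: "nat list" and n :: nat
  assumes "is_partition lam n" and "n \<ge> 1"
  shows "has_EKR {1..n} (young_subgroup lam)"
proof -
  have pos: "\<forall>x\<in>set lam. 0 < x" and "sum_list lam = n"
    using assms(1) by (auto simp: is_partition_def)
  then show ?thesis
    using has_EKR_block_group[OF partition_on_young_blocks[OF pos]] assms(2)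
    by (simp add: young_subgroup_eq_block_group)
qed

end
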